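(* Let $p \geq 5$ and let $L$ be the Laplacian of the graph $K_p \oplus C_\infty$. Let $E_K \subset l^2$ be the span of the vectors $e_{-1}-e_{-k}$, $k = 2,\ldots,p-1$ (equivalently, the set of $v \in l^2$ supported on $\{-p+1,\ldots,-1\}$ with $\sum_{j=-p+1}^{-1} v_j = 0$), and let $E_K^\perp$ be its orthogonal complement in $l^2$. For $\lambda > 4$ set $$\sigma_+(\lambda) = \tfrac12\Big[(2-\lambda) + \sqrt{(2-\lambda)^2-4}\Big], \qquad F(\lambda) = (1-\lambda)\sigma_+(\lambda) - (p-\lambda)(1-\lambda) + (p-1).$$ Then $\lambda > 4$ is an eigenvalue of $L$ with a corresponding eigenvector $v \in l^2 \cap E_K^\perp$ if and only if $F(\lambda) = 0$. Furthermore, $F(\lambda)=0$ has exactly one solution in $(p,p+2)$ and no solutions in $(4,p] \cup [p+2,+\infty)$.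
   Context: The graph $K_p \oplus C_\infty$ has vertex set $\{-p+1,\ldots,0\} \cup \{1,2,3,\ldots\}$, with edges between every pair of distinct vertices in $\{-p+1,\ldots,0\}$, the edge $\{0,1\}$, and the edges $\{j,j+1\}$ for all $j \geq 1$. $l^2$ is the real Hilbert space of square-summable real functions on the vertex set, with the standard inner product; $e_j$ is the indicator vector of vertex $j$. The Laplacian acts by $(Lv)_i = \deg(i)\, v_i - \sum_{j \sim i} v_j$. An eigenvalue with eigenvector $v \in l^2$, $v \neq 0$, means $Lv = \lambda v$. *)

theory Defs
  imports "HOL-Analysis.Analysis"
begin

definition KC_vertices :: "nat \<Rightarrow> int set" where
  "KC_vertices p = {i. 1 - int p \<le> i}"

definition KC_adj :: "nat \<Rightarrow> int \<Rightarrow> int \<Rightarrow> bool" where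
  "KC_adj p i j \<longleftrightarrow> i \<in> KC_vertices p \<and> j \<in> KC_vertices p \<and>
     ((i \<le> 0 \<and> j \<le> 0 \<and> i \<noteq> j) \<or> (i \<ge> 0 \<and> j = i + 1) \<or> (j \<ge> 0 \<and> i = j + 1))"

definition KC_nbrs :: "nat \<Rightarrow> int \<Rightarrow> int set" where
  "KC_nbrs p i = {j. KC_adj p i j}"

definition KC_deg :: "nat \<Rightarrow> int \<Rightarrow> nat" where
  "KC_deg p i = card (KC_nbrs p i)"

definition KC_laplacian :: "nat \<Rightarrow> (int \<Rightarrow> real) \<Rightarrow> int \<Rightarrow> real" where
  "KC_laplacian p v i = real (KC_deg p i) * v i - (\<Sum>j\<in>KC_nbrs p i. v j)"

definition KC_l2 :: "nat \<Rightarrow> (int \<Rightarrow> real) set" where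
  "KC_l2 p = {v. (\<forall>i. i \<notin> KC_vertices p \<longrightarrow> v i = 0) \<and>
                 (\<lambda>i. (v i)\<^sup>2) summable_on KC_vertices p}"

definition KC_inner :: "nat \<Rightarrow> (int \<Rightarrow> real) \<Rightarrow> (int \<Rightarrow> real) \<Rightarrow> real" where
  "KC_inner p v w = infsum (\<lambda>i. v i * w i) (KC_vertices p)"

definition E_K :: "nat \<Rightarrow> (int \<Rightarrow> real) set" where
  "E_K p = {v \<in> KC_l2 p. (\<forall>i. i \<notin> {1 - int p..-1} \<longrightarrow> v i = 0) \<and>
                          (\<Sum>j\<in>{1 - int p..-1}. v j) = 0}"

definition E_K_perp :: "nat \<Rightarrow> (int \<Rightarrow> real) set" where
  "E_K_perp p = {v \<in> KC_l2 p. \<forall>w \<in> E_K p. KC_inner p v w = 0}"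

definition eigen_in_EKperp :: "nat \<Rightarrow> real \<Rightarrow> bool" where
  "eigen_in_EKperp p lam \<longleftrightarrow> (\<exists>v. v \<in> KC_l2 p \<and> v \<in> E_K_perp p \<and> v \<noteq> (\<lambda>_. 0) \<and>
       (\<forall>i\<in>KC_vertices p. KC_laplacian p v i = lam * v i))"

definition sigma_plus :: "real \<Rightarrow> real" where
  "sigma_plus lam = ((2 - lam) + sqrt ((2 - lam)\<^sup>2 - 4)) / 2"

definition F_KC :: "nat \<Rightarrow> real \<Rightarrow> real" where
  "F_KC p lam = (1 - lam) * sigma_plus lam - (real p - lam) * (1 - lam) + (real p - 1)"

end

(* An eigenvector orthogonal to E_K is constant, say c, on the clique vertices -p+1..-1, and
   the eigen equation at -1 gives v_0 = (1 - lam) c.  Along the ray it solves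
   v_(n+1) = (2 - lam) v_n - v_(n-1), whose characteristic roots sigma_+ and sigma_- have
   product 1 with -1 < sigma_+ < 0 and sigma_- < -1; square summability kills the sigma_- mode.
   Hence v is c times one explicit vector, which satisfies the eigen equation at every vertex
   except 0, where the defect is exactly F(lam).  For the roots of F, write
   F(lam) = (lam - 1) (p - lam + (p - 1)/(lam - 1) - sigma_+(lam)): the second factor is strictly
   decreasing because sigma_+ = 1/sigma_- is increasing, and F(p) > 0 > F(p + 2). *)

theory Submission
  imports Defs
begin

definition sigma_minus :: "real \<Rightarrow> real" where
  "sigma_minus lam = ((2 - lam) - sqrt ((2 - lam)\<^sup>2 - 4)) / 2"

lemma sigma_plus_add_sigma_minus: "sigma_plus lam + sigma_minus lam = 2 - lam"
  by (simp add: sigma_plus_def sigma_minus_def field_simps)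

lemma sigma_discriminant_nonneg:
  fixes lam :: real
  assumes "4 \<le> lam"
  shows "0 \<le> (2 - lam)\<^sup>2 - 4"
proof -
  have "(2 - lam)\<^sup>2 - 4 = (lam - 4) * lam"
    by (simp add: power2_eq_square algebra_simps)
  also have "\<dots> \<ge> 0"
    using assms by simp
  finally show ?thesis .
qed

lemma sigma_plus_mult_sigma_minus:
  assumes "4 \<le> lam"
  shows "sigma_plus lam * sigma_minus lam = 1"
proof -
  have "(sqrt ((2 - lam)\<^sup>2 - 4))\<^sup>2 = (2 - lam)\<^sup>2 - 4"
    using sigma_discriminant_nonneg[OF assms] by simp
  then show ?thesis
    unfolding sigma_plus_def sigma_minus_def by (simp add: field_simps power2_eq_square)
qed

lemma sigma_minus_less:
  assumes "4 < lam"
  shows "sigma_minus lam < -1"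
proof -
  have "0 \<le> sqrt ((2 - lam)\<^sup>2 - 4)"
    using assms sigma_discriminant_nonneg[of lam] by simp
  then have "2 - lam - sqrt ((2 - lam)\<^sup>2 - 4) < -2"
    using assms by linarith
  then show ?thesis
    unfolding sigma_minus_def by simp
qed

lemma sigma_plus_eq_inverse:
  assumes "4 \<le> lam"
  shows "sigma_plus lam = inverse (sigma_minus lam)"
  using sigma_plus_mult_sigma_minus[OF assms]
  by (intro inverse_unique[symmetric]) (simp add: mult.commute)

lemma sigma_plus_bounds:
  assumes "4 < lam"
  shows "-1 < sigma_plus lam" "sigma_plus lam < 0"
proof -
  have prod: "sigma_plus lam * sigma_minus lam = 1" and m: "sigma_minus lam < -1"
    using assms sigma_plus_mult_sigma_minus sigma_minus_less by auto
  show "sigma_plus lam < 0"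
  proof (rule ccontr)
    assume "\<not> sigma_plus lam < 0"
    then have "sigma_plus lam * sigma_minus lam \<le> 0"
      using m by (intro mult_nonneg_nonpos) auto
    with prod show False by simp
  qed
  show "-1 < sigma_plus lam"
  proof (rule ccontr)
    assume "\<not> -1 < sigma_plus lam"
    then have "-1 * sigma_minus lam \<le> sigma_plus lam * sigma_minus lam"
      using m by (intro mult_right_mono_neg) auto
    with prod m show False by simp
  qed
qed

lemma sigma_plus_quadratic:
  assumes "4 \<le> lam"
  shows "(sigma_plus lam)\<^sup>2 + 1 = (2 - lam) * sigma_plus lam"
proof -
  have "(sigma_plus lam)\<^sup>2 + 1 = sigma_plus lam * (sigma_plus lam + sigma_minus lam)"
    using sigma_plus_mult_sigma_minus[OF assms] by (simp add: power2_eq_square algebra_simps)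
  then show ?thesis
    by (simp add: sigma_plus_add_sigma_minus mult.commute)
qed

lemma sigma_minus_strict_decreasing:
  assumes "4 \<le> l1" "l1 < l2"
  shows "sigma_minus l2 < sigma_minus l1"
proof -
  have "(l1 - 2)\<^sup>2 < (l2 - 2)\<^sup>2"
    using assms by (intro power_strict_mono) auto
  then have "sqrt ((2 - l1)\<^sup>2 - 4) < sqrt ((2 - l2)\<^sup>2 - 4)"
    by (simp add: power2_commute)
  then show ?thesis
    unfolding sigma_minus_def using assms by (intro divide_strict_right_mono) linarith+
qed

lemma sigma_plus_strict_mono:
  assumes "4 < l1" "l1 < l2"
  shows "sigma_plus l1 < sigma_plus l2"
proof -
  have "inverse (sigma_minus l1) < inverse (sigma_minus l2)"
    using assms sigma_minus_strict_decreasing[of l1 l2] sigma_minus_less[of l1]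
    by (intro less_imp_inverse_less_neg) auto
  then show ?thesis
    using assms by (simp add: sigma_plus_eq_inverse)
qed

lemma decaying_two_step_recurrence:
  fixes w :: "nat \<Rightarrow> 'a::real_normed_field"
  assumes rec: "\<And>n. w (Suc (Suc n)) = (s + m) * w (Suc n) - s * m * w n"
    and m: "1 < norm m" and lim: "w \<longlonglongrightarrow> 0"
  shows "w (Suc n) = s * w n"
proof -
  \<comment> \<open>\<open>u\<close> is geometric with ratio \<open>m\<close>, so it can only tend to 0 if it vanishes.\<close>
  define u where "u n = w (Suc n) - s * w n" for n
  have u_step: "u (Suc n) = m * u n" for n
    unfolding u_def rec by (simp add: algebra_simps)
  have u_pow: "u n = m ^ n * u 0" for n
    by (induction n) (simp_all add: u_step)
  have "u \<longlonglongrightarrow> 0 - s * 0"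
    unfolding u_def[abs_def] using lim LIMSEQ_Suc[OF lim] by (intro tendsto_diff tendsto_mult_left)
  moreover have "(\<lambda>n. inverse m ^ n) \<longlonglongrightarrow> 0"
    using m by (intro LIMSEQ_power_zero) (simp add: norm_inverse inverse_less_1_iff)
  ultimately have "(\<lambda>n. inverse m ^ n * u n) \<longlonglongrightarrow> 0 * 0"
    by (intro tendsto_mult) simp_all
  moreover have "inverse m ^ n * u n = u 0" for n
  proof -
    have "m \<noteq> 0"
      using m by auto
    have "inverse m ^ n * m ^ n = (inverse m * m) ^ n"
      by (rule power_mult_distrib[symmetric])
    also have "\<dots> = 1"
      using \<open>m \<noteq> 0\<close> by simp
    finally have "inverse m ^ n * m ^ n = 1" .
    then show ?thesis
      by (simp add: u_pow[of n] mult.assoc[symmetric])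
  qed
  ultimately have "u 0 = 0"
    by (simp add: LIMSEQ_const_iff)
  then show ?thesis
    using u_pow[of n] by (simp add: u_def)
qed

lemma square_summable_tendsto_zero:
  fixes w :: "nat \<Rightarrow> real"
  assumes "(\<lambda>n. (w n)\<^sup>2) summable_on UNIV"
  shows "w \<longlonglongrightarrow> 0"
proof -
  have "summable (\<lambda>n. (w n)\<^sup>2)"
    using assms by (simp add: summable_on_UNIV_nonneg_real_iff)
  then have "(\<lambda>n. sqrt ((w n)\<^sup>2)) \<longlonglongrightarrow> sqrt 0"
    by (intro tendsto_real_sqrt summable_LIMSEQ_zero)
  then show ?thesis
    by (simp add: tendsto_rabs_zero_iff)
qed

lemma KC_vertices_eq:
  assumes "1 \<le> p"
  shows "KC_vertices p = {1 - int p..-1} \<union> range int"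
proof (rule set_eqI)
  fix i :: int
  show "i \<in> KC_vertices p \<longleftrightarrow> i \<in> {1 - int p..-1} \<union> range int"
  proof (cases "i < 0")
    case False
    then have "i \<in> range int"
      by (metis nonneg_int_cases rangeI not_less)
    then show ?thesis
      using False assms by (auto simp: KC_vertices_def)
  qed (use assms in \<open>auto simp: KC_vertices_def\<close>)
qed

lemma KC_nbrs_clique: "i \<in> {1 - int p..-1} \<Longrightarrow> KC_nbrs p i = {1 - int p..0} - {i}"
  unfolding KC_nbrs_def KC_adj_def KC_vertices_def by auto

lemma KC_nbrs_zero: "1 \<le> p \<Longrightarrow> KC_nbrs p 0 = insert 1 {1 - int p..-1}"
  unfolding KC_nbrs_def KC_adj_def KC_vertices_def by auto

lemma KC_nbrs_ray: "1 \<le> p \<Longrightarrow> 0 < i \<Longrightarrow> KC_nbrs p i = {i - 1, i + 1}"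
  unfolding KC_nbrs_def KC_adj_def KC_vertices_def by auto

lemma KC_laplacian_scale: "KC_laplacian p (\<lambda>j. c * v j) i = c * KC_laplacian p v i"
  unfolding KC_laplacian_def by (simp add: sum_distrib_left algebra_simps)

lemma KC_laplacian_ray:
  "1 \<le> p \<Longrightarrow> 0 < i \<Longrightarrow> KC_laplacian p v i = 2 * v i - v (i - 1) - v (i + 1)"
  unfolding KC_laplacian_def KC_deg_def KC_nbrs_ray by simp

lemma KC_laplacian_clique:
  assumes i: "i \<in> {1 - int p..-1}" and v: "\<And>j. j \<in> {1 - int p..-1} \<Longrightarrow> v j = c"
  shows "KC_laplacian p v i = c - v 0"
proof -
  have p: "2 \<le> p"
    using i by auto
  have "{1 - int p..0} - {i} = insert 0 ({1 - int p..-1} - {i})"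
    using i by auto
  then have "(\<Sum>j\<in>{1 - int p..0} - {i}. v j) = v 0 + (\<Sum>j\<in>{1 - int p..-1} - {i}. v j)"
    by simp
  also have "(\<Sum>j\<in>{1 - int p..-1} - {i}. v j) = (\<Sum>j\<in>{1 - int p..-1} - {i}. c)"
    using v by simp
  also have "\<dots> = real (p - 2) * c"
  proof -
    have "card ({1 - int p..-1} - {i}) = p - 2"
      using i by (simp add: card_Diff_singleton)
    then show ?thesis
      by simp
  qed
  finally have "(\<Sum>j\<in>KC_nbrs p i. v j) = v 0 + real (p - 2) * c"
    using i by (simp add: KC_nbrs_clique)
  moreover have "KC_deg p i = p - 1"
    using i by (simp add: KC_deg_def KC_nbrs_clique card_Diff_singleton)
  ultimately show ?thesis
    unfolding KC_laplacian_def using i v p by (simp add: of_nat_diff algebra_simps)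
qed

lemma KC_laplacian_zero:
  assumes p: "1 \<le> p" and v: "\<And>j. j \<in> {1 - int p..-1} \<Longrightarrow> v j = c"
  shows "KC_laplacian p v 0 = real p * v 0 - real (p - 1) * c - v 1"
proof -
  have "(\<Sum>j\<in>{1 - int p..-1}. v j) = real (p - 1) * c"
    using p v by (simp add: nat_diff_distrib)
  moreover have "KC_deg p 0 = p"
    using p by (simp add: KC_deg_def KC_nbrs_zero)
  ultimately show ?thesis
    unfolding KC_laplacian_def using p by (simp add: KC_nbrs_zero)
qed

lemma KC_l2_finite_support:
  assumes "finite T" "T \<subseteq> KC_vertices p" "\<And>i. i \<notin> T \<Longrightarrow> v i = 0"
  shows "v \<in> KC_l2 p"
proof -
  have "(\<lambda>i. (v i)\<^sup>2) summable_on T"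
    using assms(1) by simp
  moreover have "(\<lambda>i. (v i)\<^sup>2) summable_on KC_vertices p \<longleftrightarrow> (\<lambda>i. (v i)\<^sup>2) summable_on T"
    by (rule summable_on_cong_neutral) (use assms in auto)
  ultimately have "(\<lambda>i. (v i)\<^sup>2) summable_on KC_vertices p"
    by simp
  then show ?thesis
    unfolding KC_l2_def using assms(2,3) by auto
qed

lemma KC_inner_finite_support:
  assumes "finite T" "T \<subseteq> KC_vertices p" "\<And>i. i \<notin> T \<Longrightarrow> w i = 0"
  shows "KC_inner p v w = (\<Sum>i\<in>T. v i * w i)"
proof -
  have "KC_inner p v w = infsum (\<lambda>i. v i * w i) T"
    unfolding KC_inner_def by (rule infsum_cong_neutral) (use assms in auto)
  then show ?thesis
    using assms(1) by simp
qed

lemma KC_l2_ray_tendsto_zero: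
  assumes "1 \<le> p" "v \<in> KC_l2 p"
  shows "(\<lambda>n. v (int n)) \<longlonglongrightarrow> 0"
proof (rule square_summable_tendsto_zero)
  have "(\<lambda>i. (v i)\<^sup>2) summable_on KC_vertices p"
    using assms by (simp add: KC_l2_def)
  then have "(\<lambda>i. (v i)\<^sup>2) summable_on range int"
    by (rule summable_on_subset_banach) (use assms(1) in \<open>auto simp: KC_vertices_def\<close>)
  then show "(\<lambda>n. (v (int n))\<^sup>2) summable_on UNIV"
    by (simp add: summable_on_reindex o_def)
qed

lemma E_K_perp_const_on_clique:
  assumes v: "v \<in> E_K_perp p" and a: "a \<in> {1 - int p..-1}" and b: "b \<in> {1 - int p..-1}"
  shows "v a = v b"
proof -
  define w :: "int \<Rightarrow> real" where "w i = of_bool (i = a) - of_bool (i = b)" for i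
  have supp: "w i = 0" if "i \<notin> {a, b}" for i
    using that by (simp add: w_def)
  have ab: "{a, b} \<subseteq> KC_vertices p"
    using a b by (auto simp: KC_vertices_def)
  have "w \<in> KC_l2 p"
    by (rule KC_l2_finite_support[OF _ ab supp]) simp
  moreover have "(\<Sum>j\<in>{1 - int p..-1}. w j) = 0"
    using a b by (simp add: w_def sum_subtractf)
  moreover have "w i = 0" if "i \<notin> {1 - int p..-1}" for i
    using that a b by (intro supp) auto
  ultimately have "w \<in> E_K p"
    unfolding E_K_def by blast
  then have "KC_inner p v w = 0"
    using v by (simp add: E_K_perp_def)
  moreover have "KC_inner p v w = (\<Sum>i\<in>{a, b}. v i * w i)"
    by (rule KC_inner_finite_support[OF _ ab supp]) simp
  moreover have "(\<Sum>i\<in>{a, b}. v i * w i) = v a - v b"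
    by (cases "a = b") (simp_all add: w_def)
  ultimately show ?thesis
    by simp
qed

(* The solution on the ray is the decaying mode sigma_plus^n, scaled to match the value
   v_0 = 1 - lam forced by the eigen equation at the clique vertices. *)
definition KC_ansatz :: "nat \<Rightarrow> real \<Rightarrow> int \<Rightarrow> real" where
  "KC_ansatz p lam i =
     (if 0 \<le> i then (1 - lam) * sigma_plus lam ^ nat i else if 1 - int p \<le> i then 1 else 0)"

lemma KC_ansatz_clique [simp]: "i \<in> {1 - int p..-1} \<Longrightarrow> KC_ansatz p lam i = 1"
  by (simp add: KC_ansatz_def)

lemma KC_ansatz_ray [simp]: "KC_ansatz p lam (int n) = (1 - lam) * sigma_plus lam ^ n"
  by (simp add: KC_ansatz_def)

lemma KC_ansatz_zero [simp]: "KC_ansatz p lam 0 = 1 - lam"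
  by (simp add: KC_ansatz_def)

lemma KC_ansatz_l2:
  assumes "1 \<le> p" "4 < lam"
  shows "KC_ansatz p lam \<in> KC_l2 p"
proof -
  have "\<bar>sigma_plus lam\<bar> < 1"
    using sigma_plus_bounds[OF assms(2)] by linarith
  then have "summable (\<lambda>n. (1 - lam)\<^sup>2 * ((sigma_plus lam)\<^sup>2) ^ n)"
    by (intro summable_mult summable_geometric) (simp add: abs_square_less_1)
  then have "(\<lambda>n. (1 - lam)\<^sup>2 * ((sigma_plus lam)\<^sup>2) ^ n) summable_on UNIV"
    by (simp add: summable_on_UNIV_nonneg_real_iff)
  moreover have "(KC_ansatz p lam (int n))\<^sup>2 = (1 - lam)\<^sup>2 * ((sigma_plus lam)\<^sup>2) ^ n" for n
    by (simp add: power_mult_distrib power_even_eq[symmetric] power_mult)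
  ultimately have "(\<lambda>n. (KC_ansatz p lam (int n))\<^sup>2) summable_on UNIV"
    by simp
  then have "(\<lambda>i. (KC_ansatz p lam i)\<^sup>2) summable_on range int"
    by (simp add: summable_on_reindex o_def)
  then have "(\<lambda>i. (KC_ansatz p lam i)\<^sup>2) summable_on ({1 - int p..-1} \<union> range int)"
    by (intro summable_on_union) simp_all
  then show ?thesis
    unfolding KC_l2_def KC_vertices_eq[OF assms(1), symmetric]
    using assms(1) by (auto simp: KC_ansatz_def KC_vertices_def)
qed

lemma KC_ansatz_E_K_perp:
  assumes "1 \<le> p" "4 < lam"
  shows "KC_ansatz p lam \<in> E_K_perp p"
  unfolding E_K_perp_def
proof (intro CollectI conjI ballI KC_ansatz_l2 assms)
  fix w assume w: "w \<in> E_K p"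
  have "KC_inner p (KC_ansatz p lam) w = (\<Sum>i\<in>{1 - int p..-1}. KC_ansatz p lam i * w i)"
    by (rule KC_inner_finite_support) (use w in \<open>auto simp: E_K_def KC_vertices_def\<close>)
  also have "\<dots> = (\<Sum>i\<in>{1 - int p..-1}. w i)"
    by simp
  also have "\<dots> = 0"
    using w by (simp add: E_K_def)
  finally show "KC_inner p (KC_ansatz p lam) w = 0" .
qed

lemma KC_ansatz_nonzero:
  assumes "2 \<le> p"
  shows "KC_ansatz p lam \<noteq> (\<lambda>_. 0)"
proof
  assume "KC_ansatz p lam = (\<lambda>_. 0)"
  then have "KC_ansatz p lam (-1) = 0"
    by simp
  moreover have "KC_ansatz p lam (-1) = 1"
    using assms by simp
  ultimately show False
    by simp
qed

lemma KC_ansatz_laplacian: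
  assumes p: "1 \<le> p" and lam: "4 \<le> lam" and i: "i \<in> KC_vertices p" "i \<noteq> 0"
  shows "KC_laplacian p (KC_ansatz p lam) i = lam * KC_ansatz p lam i"
proof (cases "i < 0")
  case True
  then have "i \<in> {1 - int p..-1}"
    using i by (auto simp: KC_vertices_def)
  then have "KC_laplacian p (KC_ansatz p lam) i = 1 - KC_ansatz p lam 0"
    by (rule KC_laplacian_clique) simp
  then show ?thesis
    using \<open>i \<in> {1 - int p..-1}\<close> by simp
next
  case False
  define n where "n = nat (i - 1)"
  have n: "i = int (Suc n)"
    using False i(2) by (simp add: n_def)
  define s where "s = sigma_plus lam"
  have quadratic: "2 * s - 1 - s\<^sup>2 = lam * s"
    using sigma_plus_quadratic[OF lam] by (simp add: s_def algebra_simps)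
  have "i - 1 = int n" "i + 1 = int (Suc (Suc n))"
    using n by simp_all
  then have "KC_laplacian p (KC_ansatz p lam) i
      = 2 * ((1 - lam) * s ^ Suc n) - (1 - lam) * s ^ n - (1 - lam) * s ^ Suc (Suc n)"
    using p n by (simp only: KC_laplacian_ray KC_ansatz_ray s_def)
  also have "\<dots> = (1 - lam) * s ^ n * (2 * s - 1 - s\<^sup>2)"
    by (simp add: algebra_simps power2_eq_square)
  also have "\<dots> = lam * ((1 - lam) * s ^ Suc n)"
    by (simp add: quadratic)
  also have "\<dots> = lam * KC_ansatz p lam i"
    by (simp only: n KC_ansatz_ray s_def)
  finally show ?thesis .
qed

lemma KC_ansatz_laplacian_zero:
  assumes "1 \<le> p"
  shows "KC_laplacian p (KC_ansatz p lam) 0 = lam * KC_ansatz p lam 0 - F_KC p lam"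
proof -
  have "KC_laplacian p (KC_ansatz p lam) 0 = real p * (1 - lam) - real (p - 1) - KC_ansatz p lam 1"
    using KC_laplacian_zero[OF assms, of "KC_ansatz p lam" 1] by simp
  also have "KC_ansatz p lam 1 = (1 - lam) * sigma_plus lam"
    using KC_ansatz_ray[of p lam 1] by simp
  finally show ?thesis
    using assms by (simp add: F_KC_def algebra_simps)
qed

lemma E_K_perp_eigenvector_eq_ansatz:
  assumes p: "2 \<le> p" and lam: "4 < lam" and v: "v \<in> E_K_perp p"
    and eig: "\<And>i. i \<in> KC_vertices p \<Longrightarrow> i \<noteq> 0 \<Longrightarrow> KC_laplacian p v i = lam * v i"
  shows "v = (\<lambda>i. v (-1) * KC_ansatz p lam i)"
proof -
  define c where "c = v (-1)"
  have clique: "v j = c" if "j \<in> {1 - int p..-1}" for j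
    unfolding c_def using v that p by (intro E_K_perp_const_on_clique) auto
  have l2: "v \<in> KC_l2 p"
    using v by (simp add: E_K_perp_def)
  have "-1 \<in> {1 - int p..-1}"
    using p by simp
  then have "KC_laplacian p v (-1) = c - v 0"
    using clique by (rule KC_laplacian_clique)
  moreover have "KC_laplacian p v (-1) = lam * c"
    using eig[of "-1"] p by (simp add: KC_vertices_def c_def)
  ultimately have v0: "v 0 = (1 - lam) * c"
    by (simp add: algebra_simps)
  define w where "w n = v (int n)" for n
  have "w (Suc (Suc n)) = (sigma_plus lam + sigma_minus lam) * w (Suc n)
      - sigma_plus lam * sigma_minus lam * w n" for n
  proof -
    have "int (Suc n) \<in> KC_vertices p"
      by (simp add: KC_vertices_def)
    then have "2 * w (Suc n) - w n - w (Suc (Suc n)) = lam * w (Suc n)"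
      using eig[of "int (Suc n)"] p KC_laplacian_ray[of p "int (Suc n)" v]
      by (simp add: w_def add.commute)
    then show ?thesis
      using lam by (simp add: sigma_plus_add_sigma_minus sigma_plus_mult_sigma_minus algebra_simps)
  qed
  moreover have "1 < norm (sigma_minus lam)"
    using sigma_minus_less[OF lam] by simp
  moreover have "w \<longlonglongrightarrow> 0"
    unfolding w_def using p l2 by (intro KC_l2_ray_tendsto_zero) auto
  ultimately have w_step: "w (Suc n) = sigma_plus lam * w n" for n
    by (rule decaying_two_step_recurrence)
  have "w n = c * ((1 - lam) * sigma_plus lam ^ n)" for n
    by (induction n) (simp_all add: w_step, simp add: w_def v0)
  then have ray: "v (int n) = c * KC_ansatz p lam (int n)" for n
    by (simp add: w_def)
  show ?thesis
  proof
    fix i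
    consider "i < 1 - int p" | "1 - int p \<le> i" "i < 0" | "0 \<le> i"
      by linarith
    then show "v i = v (-1) * KC_ansatz p lam i"
    proof cases
      case 1
      then show ?thesis
        using l2 by (simp add: KC_l2_def KC_vertices_def KC_ansatz_def)
    next
      case 2
      then show ?thesis
        using clique[of i] by (simp add: c_def)
    next
      case 3
      then show ?thesis
        using ray[of "nat i"] by (simp add: c_def)
    qed
  qed
qed

lemma eigen_in_EKperp_iff:
  assumes p: "2 \<le> p" and lam: "4 < lam"
  shows "eigen_in_EKperp p lam \<longleftrightarrow> F_KC p lam = 0"
proof
  assume "eigen_in_EKperp p lam"
  then obtain v where v: "v \<in> E_K_perp p" "v \<noteq> (\<lambda>_. 0)"
    and eig: "\<And>i. i \<in> KC_vertices p \<Longrightarrow> KC_laplacian p v i = lam * v i"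
    unfolding eigen_in_EKperp_def by blast
  define c where "c = v (-1)"
  have v_eq: "v = (\<lambda>i. c * KC_ansatz p lam i)"
    unfolding c_def using p lam v(1) eig by (rule E_K_perp_eigenvector_eq_ansatz)
  then have "c \<noteq> 0"
    using v(2) by auto
  have "0 \<in> KC_vertices p"
    using p by (simp add: KC_vertices_def)
  then have "lam * v 0 = c * (lam * KC_ansatz p lam 0 - F_KC p lam)"
    using eig[of 0] p
    by (simp add: v_eq KC_laplacian_scale KC_ansatz_laplacian_zero)
  then have "c * F_KC p lam = 0"
    by (simp add: v_eq algebra_simps)
  with \<open>c \<noteq> 0\<close> show "F_KC p lam = 0"
    by simp
next
  assume F: "F_KC p lam = 0"
  have "KC_laplacian p (KC_ansatz p lam) i = lam * KC_ansatz p lam i"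
    if "i \<in> KC_vertices p" for i
    using that p lam F KC_ansatz_laplacian KC_ansatz_laplacian_zero
    by (cases "i = 0") auto
  then show "eigen_in_EKperp p lam"
    unfolding eigen_in_EKperp_def using p lam
    by (intro exI[of _ "KC_ansatz p lam"] conjI ballI KC_ansatz_l2 KC_ansatz_E_K_perp
        KC_ansatz_nonzero) auto
qed

lemma F_KC_pos:
  assumes "4 < lam" "lam \<le> real p"
  shows "0 < F_KC p lam"
proof -
  have "0 < (1 - lam) * sigma_plus lam"
    using assms(1) sigma_plus_bounds(2)[OF assms(1)] by (intro mult_neg_neg) auto
  moreover have "(real p - lam) * (1 - lam) \<le> 0"
    using assms by (intro mult_nonneg_nonpos) auto
  ultimately show ?thesis
    unfolding F_KC_def using assms by linarith
qed

lemma F_KC_neg: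
  assumes "4 < lam" "real p + 2 \<le> lam"
  shows "F_KC p lam < 0"
proof -
  define X where "X = (lam - 1) * - sigma_plus lam"
  define Y where "Y = (lam - real p) * (lam - 1)"
  have "X < (lam - 1) * 1"
    unfolding X_def using assms(1) sigma_plus_bounds(1)[OF assms(1)]
    by (intro mult_strict_left_mono) auto
  moreover have "2 * (lam - 1) \<le> Y"
    unfolding Y_def using assms by (intro mult_right_mono) auto
  moreover have "F_KC p lam = X - Y + (real p - 1)"
    unfolding F_KC_def X_def Y_def by (simp add: algebra_simps)
  ultimately show ?thesis
    using assms(2) by simp
qed

lemma isCont_F_KC: "isCont (F_KC p) lam"
  unfolding F_KC_def[abs_def] sigma_plus_def by (intro continuous_intros) auto

lemma F_KC_factor:
  assumes "lam \<noteq> 1"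
  shows "F_KC p lam = (lam - 1) * (real p - lam + (real p - 1) / (lam - 1) - sigma_plus lam)"
  using assms by (simp add: F_KC_def field_simps)

lemma F_KC_root_unique:
  assumes p: "1 \<le> p" and l: "4 < l1" "4 < l2" and F: "F_KC p l1 = 0" "F_KC p l2 = 0"
  shows "l1 = l2"
proof -
  define g where "g lam = real p - lam + (real p - 1) / (lam - 1) - sigma_plus lam" for lam
  have g_decreasing: "g b < g a" if "4 < a" "a < b" for a b
  proof -
    have "(real p - 1) / (b - 1) \<le> (real p - 1) / (a - 1)"
      using that p by (intro divide_left_mono) auto
    then show ?thesis
      using that sigma_plus_strict_mono[of a b] by (simp add: g_def)
  qed
  have "g l1 = 0" "g l2 = 0"
    using F l F_KC_factor[of l1 p] F_KC_factor[of l2 p] by (simp_all add: g_def)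
  then show ?thesis
    using g_decreasing[of l1 l2] g_decreasing[of l2 l1] l by (cases l1 l2 rule: linorder_cases) auto
qed

lemma F_KC_root_exists:
  assumes "4 < real p"
  obtains lam where "real p < lam" "lam < real p + 2" "F_KC p lam = 0"
proof -
  have pos: "0 < F_KC p (real p)" and neg: "F_KC p (real p + 2) < 0"
    using assms by (simp_all add: F_KC_pos F_KC_neg)
  then obtain lam where lam: "real p \<le> lam" "lam \<le> real p + 2" "F_KC p lam = 0"
    using IVT2[of "F_KC p" "real p + 2" 0 "real p"] isCont_F_KC by auto
  moreover have "lam \<noteq> real p" "lam \<noteq> real p + 2"
    using pos neg lam(3) by auto
  ultimately show thesis
    using that[of lam] by linarith
qed

theorem proposition4:
  fixes p :: nat
  assumes "p \<ge> 5"
  shows "(\<forall>lam::real. lam > 4 \<longrightarrow> (eigen_in_EKperp p lam \<longleftrightarrow> F_KC p lam = 0))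
       \<and> (\<exists>!lam::real. real p < lam \<and> lam < real p + 2 \<and> F_KC p lam = 0)
       \<and> (\<forall>lam::real. (4 < lam \<and> lam \<le> real p) \<or> real p + 2 \<le> lam \<longrightarrow> F_KC p lam \<noteq> 0)"
proof (intro conjI allI impI)
  fix lam :: real
  assume "4 < lam"
  then show "eigen_in_EKperp p lam \<longleftrightarrow> F_KC p lam = 0"
    using assms by (intro eigen_in_EKperp_iff) auto
next
  have p: "4 < real p"
    using assms by simp
  then obtain root where root: "real p < root" "root < real p + 2" "F_KC p root = 0"
    by (rule F_KC_root_exists)
  show "\<exists>!lam. real p < lam \<and> lam < real p + 2 \<and> F_KC p lam = 0"
  proof (rule ex1I[of _ root])
    fix lam
    assume "real p < lam \<and> lam < real p + 2 \<and> F_KC p lam = 0"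
    then show "lam = root"
      using root p assms by (auto intro: F_KC_root_unique[of p lam root])
  qed (use root in auto)
next
  fix lam :: real
  assume "4 < lam \<and> lam \<le> real p \<or> real p + 2 \<le> lam"
  then show "F_KC p lam \<noteq> 0"
  proof (elim disjE conjE)
    assume "4 < lam" "lam \<le> real p"
    then show ?thesis
      using F_KC_pos[of lam p] by simp
  next
    assume "real p + 2 \<le> lam"
    then show ?thesis
      using F_KC_neg[of lam p] assms by simp
  qed
qed

end
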